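(* Let $c,d>0$ and let $\mathcal R(c,d)=(0,c)\times(0,d)\subset\mathbb R^2$. Let $u$ be a real-valued Neumann eigenfunction of the Laplacian on $\mathcal R(c,d)$, i.e. $-\Delta u=\lambda u$ in $\mathcal R(c,d)$ for some $\lambda$, with $\frac{\partial u}{\partial \nu}=0$ on $\partial\mathcal R(c,d)$, where $\nu$ is the outward normal. If $u>0$ on $\partial\mathcal R(c,d)$, then $u$ is constant (necessarily a positive constant).
   Context: The Neumann eigenvalues of $\mathcal R(c,d)$ are $\lambda_{m,n}=\pi^2(m^2/c^2+n^2/d^2)$, $(m,n)\in\mathbb N_0^2$, with eigenfunctions $\cos(m\pi x/c)\cos(n\pi y/d)$; an eigenfunction for a (possibly degenerate) eigenvalue $\lambda$ is any nonzero real linear combination of those $\cos(m\pi x/c)\cos(n\pi y/d)$ with $\lambda_{m,n}=\lambda$. The eigenfunction is smooth up to the boundary, so its boundary values make sense. *)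

theory Defs
  imports "HOL-Analysis.Analysis"
begin

definition rect :: "real \<Rightarrow> real \<Rightarrow> (real \<times> real) set" where
  "rect c d = {0<..<c} \<times> {0<..<d}"

definition neumann_eigenvalue :: "real \<Rightarrow> real \<Rightarrow> nat \<Rightarrow> nat \<Rightarrow> real" where
  "neumann_eigenvalue c d m n = pi\<^sup>2 * (real m ^ 2 / c\<^sup>2 + real n ^ 2 / d\<^sup>2)"

definition neumann_modes :: "real \<Rightarrow> real \<Rightarrow> real \<Rightarrow> (nat \<times> nat) set" where
  "neumann_modes c d lam = {(m, n). neumann_eigenvalue c d m n = lam}"

definition neumann_eigenfunction ::
    "real \<Rightarrow> real \<Rightarrow> real \<Rightarrow> (real \<times> real \<Rightarrow> real) \<Rightarrow> bool" where
  "neumann_eigenfunction c d lam u \<longleftrightarrow>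
     (\<exists>a :: nat \<Rightarrow> nat \<Rightarrow> real.
        (\<exists>(m, n) \<in> neumann_modes c d lam. a m n \<noteq> 0) \<and>
        (\<forall>x y. u (x, y) =
           (\<Sum>(m, n) \<in> neumann_modes c d lam.
              a m n * cos (real m * pi * x / c) * cos (real n * pi * y / d))))"

end

theory Submission
  imports Defs
begin

text \<open>
  On the two edges through the origin, \<open>u\<close> restricts to a cosine polynomial
  \<open>\<Sum> a\<^sub>m\<^sub>n cos (m\<pi>x/c)\<close> resp. \<open>\<Sum> a\<^sub>m\<^sub>n cos (n\<pi>y/d)\<close>. Every cosine of positive
  frequency integrates to zero over the edge, so a positive such sum needs a frequency-zero
  term: hence both modes \<open>(m\<^sub>0,0)\<close> and \<open>(0,n\<^sub>0)\<close> occur. If \<open>\<lambda> = 0\<close> the only mode is \<open>(0,0)\<close> and \<open>u\<close> is constant.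
  Otherwise every mode lies on the ellipse \<open>m\<^sup>2/m\<^sub>0\<^sup>2 + n\<^sup>2/n\<^sub>0\<^sup>2 = 1\<close>. Writing
  \<open>m\<^sub>0 = g p\<close>, \<open>n\<^sub>0 = g q\<close> with \<open>g = gcd m\<^sub>0 n\<^sub>0 = 2\<^sup>e h\<close>, \<open>h\<close> odd, each mode is
  \<open>(2\<^sup>e p s, 2\<^sup>e q t)\<close> with \<open>s\<^sup>2 + t\<^sup>2 = h\<^sup>2\<close>, so \<open>s\<close> and \<open>t\<close> have opposite parity.
  Consequently \<open>u(c/(2\<^sup>e p), 0) + u(0, d/(2\<^sup>e q)) = \<Sum> a\<^sub>m\<^sub>n ((-1)\<^sup>s + (-1)\<^sup>t) = 0\<close>,
  contradicting positivity on the boundary.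
\<close>

lemma cos_multiple_has_integral_zero:
  assumes "k \<ge> 1" "d > 0"
  shows "((\<lambda>y. b * cos (real k * pi * y / d)) has_integral 0) {0..d}"
proof -
  define F where "F y = b * d / (real k * pi) * sin (real k * pi * y / d)" for y
  have "((\<lambda>y. b * cos (real k * pi * y / d)) has_integral (F d - F 0)) {0..d}"
  proof (rule fundamental_theorem_of_calculus)
    fix x assume "x \<in> {0..d}"
    have "(F has_real_derivative b * cos (real k * pi * x / d)) (at x within {0..d})"
      unfolding F_def using assms by (auto intro!: derivative_eq_intros simp: field_simps)
    then show "(F has_vector_derivative b * cos (real k * pi * x / d)) (at x within {0..d})"
      by (simp add: has_real_derivative_iff_has_vector_derivative)
  qed (use assms in simp)
  moreover have "F d = 0" "F 0 = 0"
    unfolding F_def using assms by (auto simp: field_simps)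
  ultimately show ?thesis by simp
qed

lemma positive_cosine_sum_has_zero_frequency:
  assumes "finite S" "d > 0"
    and pos: "\<forall>y\<in>{0..d}. (\<Sum>i\<in>S. b i * cos (real (f i) * pi * y / d)) > 0"
  shows "\<exists>i\<in>S. f i = 0"
proof (rule ccontr)
  assume "\<not> (\<exists>i\<in>S. f i = 0)"
  then have "\<forall>i\<in>S. f i \<ge> 1" by (simp add: Suc_le_eq)
  let ?g = "\<lambda>y. \<Sum>i\<in>S. b i * cos (real (f i) * pi * y / d)"
  have "(?g has_integral 0) {0..d}"
    using has_integral_sum[OF \<open>finite S\<close>, of "\<lambda>i y. b i * cos (real (f i) * pi * y / d)" "\<lambda>i. 0"]
      cos_multiple_has_integral_zero \<open>\<forall>i\<in>S. f i \<ge> 1\<close> \<open>d > 0\<close> by simp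
  moreover have "continuous_on {0..d} ?g"
    by (intro continuous_intros) (use \<open>d > 0\<close> in auto)
  ultimately have "?g 0 = 0"
    using has_integral_0_cbox_imp_0[of 0 d ?g 0] pos \<open>d > 0\<close> by (auto simp: less_imp_le)
  moreover have "?g 0 > 0" using \<open>d > 0\<close> by (intro bspec[OF pos]) auto
  ultimately show False by simp
qed

lemma odd_squares_sum_mod_4:
  fixes s t :: nat
  assumes "odd s" "odd t"
  shows "(s\<^sup>2 + t\<^sup>2) mod 4 = 2"
proof -
  obtain a b where "s = 2 * a + 1" "t = 2 * b + 1"
    using assms by (auto elim!: oddE)
  then have "s\<^sup>2 + t\<^sup>2 = 4 * (a * a + a + b * b + b) + 2"
    by (simp add: power2_eq_square algebra_simps)
  then show ?thesis by presburger
qed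

lemma sum_two_squares_two_power:
  fixes s t h :: nat
  assumes "s\<^sup>2 + t\<^sup>2 = (2 ^ e * h)\<^sup>2" "odd h"
  shows "2 ^ e dvd s \<and> 2 ^ e dvd t \<and> (odd (s div 2 ^ e) \<longleftrightarrow> even (t div 2 ^ e))"
  using assms(1)
proof (induction e arbitrary: s t)
  case 0
  then have "odd (s\<^sup>2 + t\<^sup>2)" using \<open>odd h\<close> by simp
  then show ?case by auto
next
  case (Suc e)
  have eq: "s\<^sup>2 + t\<^sup>2 = 4 * (2 ^ e * h)\<^sup>2"
    using Suc.prems by (simp add: power_mult_distrib)
  have "even s \<and> even t"
  proof (rule ccontr)
    assume "\<not> (even s \<and> even t)"
    moreover have "even (s\<^sup>2 + t\<^sup>2)" using eq by simp
    ultimately have "(s\<^sup>2 + t\<^sup>2) mod 4 = 2" by (auto intro: odd_squares_sum_mod_4)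
    with eq show False by simp
  qed
  then obtain s' t' where st: "s = 2 * s'" "t = 2 * t'" by blast
  have "s'\<^sup>2 + t'\<^sup>2 = (2 ^ e * h)\<^sup>2"
    using eq unfolding st by (simp add: power_mult_distrib)
  from Suc.IH[OF this] show ?case
    unfolding st by (auto simp: div_mult2_eq)
qed

lemma ellipse_lattice_point_decompose:
  fixes m n m0 n0 :: nat
  assumes "m0 \<ge> 1" "n0 \<ge> 1"
    and eq: "m\<^sup>2 * n0\<^sup>2 + n\<^sup>2 * m0\<^sup>2 = m0\<^sup>2 * n0\<^sup>2"
    and "gcd m0 n0 = 2 ^ e * h" "odd h"
  shows "\<exists>s t. m = m0 div gcd m0 n0 * 2 ^ e * s \<and> n = n0 div gcd m0 n0 * 2 ^ e * t
               \<and> (odd s \<longleftrightarrow> even t)"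
proof -
  define g where "g = gcd m0 n0"
  define p where "p = m0 div g"
  define q where "q = n0 div g"
  have "g \<ge> 1" using \<open>m0 \<ge> 1\<close> by (simp add: g_def Suc_le_eq)
  have m0_eq: "m0 = g * p" and n0_eq: "n0 = g * q" by (simp_all add: p_def q_def g_def)
  then have "p \<ge> 1" "q \<ge> 1" using assms(1,2) by (auto simp: Suc_le_eq)
  have "coprime p q"
    unfolding p_def q_def g_def using div_gcd_coprime[of m0 n0] \<open>m0 \<ge> 1\<close> by auto
  have "g\<^sup>2 * (m\<^sup>2 * q\<^sup>2 + n\<^sup>2 * p\<^sup>2) = g\<^sup>2 * (g\<^sup>2 * p\<^sup>2 * q\<^sup>2)"
    using eq unfolding m0_eq n0_eq by (simp add: power_mult_distrib algebra_simps)
  then have eq': "m\<^sup>2 * q\<^sup>2 + n\<^sup>2 * p\<^sup>2 = g\<^sup>2 * p\<^sup>2 * q\<^sup>2" using \<open>g \<ge> 1\<close> by simp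
  have "p\<^sup>2 dvd m\<^sup>2 * q\<^sup>2"
  proof -
    have "m\<^sup>2 * q\<^sup>2 = g\<^sup>2 * p\<^sup>2 * q\<^sup>2 - n\<^sup>2 * p\<^sup>2" using eq' by simp
    then show ?thesis by (simp add: dvd_diff_nat)
  qed
  then have "p dvd m"
    using \<open>coprime p q\<close> by (simp add: coprime_dvd_mult_left_iff)
  then obtain s' where s': "m = p * s'" by blast
  have "q\<^sup>2 dvd n\<^sup>2 * p\<^sup>2"
  proof -
    have "n\<^sup>2 * p\<^sup>2 = g\<^sup>2 * p\<^sup>2 * q\<^sup>2 - m\<^sup>2 * q\<^sup>2" using eq' by simp
    then show ?thesis by (simp add: dvd_diff_nat)
  qed
  then have "q dvd n"
    using \<open>coprime p q\<close> by (simp add: coprime_dvd_mult_left_iff coprime_commute)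
  then obtain t' where t': "n = q * t'" by blast
  have "p\<^sup>2 * q\<^sup>2 * (s'\<^sup>2 + t'\<^sup>2) = p\<^sup>2 * q\<^sup>2 * g\<^sup>2"
    using eq' unfolding s' t' by (simp add: power_mult_distrib algebra_simps)
  then have "s'\<^sup>2 + t'\<^sup>2 = (2 ^ e * h)\<^sup>2"
    using \<open>p \<ge> 1\<close> \<open>q \<ge> 1\<close> assms(4) by (simp add: g_def)
  from sum_two_squares_two_power[OF this \<open>odd h\<close>] show ?thesis
    unfolding s' t' p_def[symmetric] q_def[symmetric] g_def[symmetric]
    by (intro exI[of _ "s' div 2 ^ e"] exI[of _ "t' div 2 ^ e"]) (auto simp: mult.assoc)
qed

lemma neumann_modes_finite:
  assumes "c > 0" "d > 0"
  shows "finite (neumann_modes c d lam)"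
proof -
  define K where "K = nat \<lceil>lam * (c\<^sup>2 + d\<^sup>2) / pi\<^sup>2\<rceil>"
  have bound: "k \<le> K" if "real k ^ 2 / r\<^sup>2 \<le> lam / pi\<^sup>2" "r\<^sup>2 \<le> c\<^sup>2 + d\<^sup>2" "r > 0" for k r
  proof -
    have "0 \<le> real k ^ 2 / r\<^sup>2" by simp
    with that(1) have "0 \<le> lam / pi\<^sup>2" by linarith
    then have "lam \<ge> 0" by (simp add: zero_le_divide_iff)
    have "real k \<le> real k ^ 2" by (cases k) (auto simp: power2_eq_square)
    also have "\<dots> \<le> r\<^sup>2 * (lam / pi\<^sup>2)" using that(1,3) by (simp add: field_simps)
    also have "\<dots> \<le> lam * (c\<^sup>2 + d\<^sup>2) / pi\<^sup>2"
      using mult_left_mono[OF that(2) \<open>lam \<ge> 0\<close>] by (simp add: field_simps)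
    finally show ?thesis unfolding K_def by linarith
  qed
  have "neumann_modes c d lam \<subseteq> {..K} \<times> {..K}"
  proof clarify
    fix m n assume "(m, n) \<in> neumann_modes c d lam"
    then have e: "real m ^ 2 / c\<^sup>2 + real n ^ 2 / d\<^sup>2 = lam / pi\<^sup>2"
      by (simp add: neumann_modes_def neumann_eigenvalue_def field_simps)
    have "real m ^ 2 / c\<^sup>2 \<ge> 0" "real n ^ 2 / d\<^sup>2 \<ge> 0" by simp_all
    with e have "real m ^ 2 / c\<^sup>2 \<le> lam / pi\<^sup>2" "real n ^ 2 / d\<^sup>2 \<le> lam / pi\<^sup>2"
      by linarith+
    with assms show "m \<in> {..K} \<and> n \<in> {..K}"
      using bound[of m c] bound[of n d] by simp
  qed
  then show ?thesis by (rule finite_subset) auto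
qed

lemma neumann_modes_zero:
  assumes "c > 0" "d > 0"
  shows "neumann_modes c d 0 = {(0, 0)}"
proof -
  have "m = 0 \<and> n = 0" if "real m ^ 2 / c\<^sup>2 + real n ^ 2 / d\<^sup>2 = 0" for m n
  proof -
    have "real m ^ 2 / c\<^sup>2 \<ge> 0" "real n ^ 2 / d\<^sup>2 \<ge> 0" by simp_all
    with that have "real m ^ 2 / c\<^sup>2 = 0" "real n ^ 2 / d\<^sup>2 = 0" by linarith+
    with assms show ?thesis by simp
  qed
  then show ?thesis
    by (auto simp: neumann_modes_def neumann_eigenvalue_def)
qed

lemma neumann_eigenfunction_zero_eigenvalue:
  assumes "c > 0" "d > 0" "neumann_eigenfunction c d 0 u"
  shows "\<exists>k. \<forall>p. u p = k"
  using assms(3) by (auto simp: neumann_eigenfunction_def neumann_modes_zero[OF assms(1,2)])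

lemma neumann_modes_ellipse:
  assumes "c > 0" "d > 0" "lam \<noteq> 0"
    and "(m0, 0) \<in> neumann_modes c d lam" "(0, n0) \<in> neumann_modes c d lam"
    and "(m, n) \<in> neumann_modes c d lam"
  shows "m\<^sup>2 * n0\<^sup>2 + n\<^sup>2 * m0\<^sup>2 = m0\<^sup>2 * n0\<^sup>2"
proof -
  define X where "X = pi\<^sup>2 / c\<^sup>2"
  define Y where "Y = pi\<^sup>2 / d\<^sup>2"
  have m0: "real m0 ^ 2 * X = lam" and n0: "real n0 ^ 2 * Y = lam"
    and mn: "real m ^ 2 * X + real n ^ 2 * Y = lam"
    using assms(4-6)
    by (simp_all add: neumann_modes_def neumann_eigenvalue_def X_def Y_def field_simps)
  have "lam * (real m ^ 2 * real n0 ^ 2 + real n ^ 2 * real m0 ^ 2)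
      = real m ^ 2 * real n0 ^ 2 * lam + real n ^ 2 * real m0 ^ 2 * lam"
    by (simp add: algebra_simps)
  also have "\<dots> = real m ^ 2 * real n0 ^ 2 * (real m0 ^ 2 * X)
      + real n ^ 2 * real m0 ^ 2 * (real n0 ^ 2 * Y)"
    unfolding m0 n0 ..
  also have "\<dots> = real m0 ^ 2 * real n0 ^ 2 * (real m ^ 2 * X + real n ^ 2 * Y)"
    by (simp add: algebra_simps)
  also have "\<dots> = lam * (real m0 ^ 2 * real n0 ^ 2)"
    by (simp add: mn)
  finally have "real (m\<^sup>2 * n0\<^sup>2 + n\<^sup>2 * m0\<^sup>2) = real (m0\<^sup>2 * n0\<^sup>2)"
    using \<open>lam \<noteq> 0\<close> by simp
  then show ?thesis by (simp only: of_nat_eq_iff)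
qed

lemma neumann_eigenfunction_edge_modes:
  assumes "c > 0" "d > 0" "neumann_eigenfunction c d lam u"
    and pos_x: "\<forall>x\<in>{0..c}. u (x, 0) > 0" and pos_y: "\<forall>y\<in>{0..d}. u (0, y) > 0"
  shows "\<exists>m0. (m0, 0) \<in> neumann_modes c d lam" "\<exists>n0. (0, n0) \<in> neumann_modes c d lam"
proof -
  let ?M = "neumann_modes c d lam"
  obtain a where u: "\<And>x y. u (x, y) =
      (\<Sum>(m, n) \<in> ?M. a m n * cos (real m * pi * x / c) * cos (real n * pi * y / d))"
    using assms(3) unfolding neumann_eigenfunction_def by blast
  have fin: "finite ?M" using neumann_modes_finite assms(1,2) .
  have "\<forall>y\<in>{0..d}. (\<Sum>i\<in>?M. a (fst i) (snd i) * cos (real (snd i) * pi * y / d)) > 0"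
    using pos_y by (simp add: u case_prod_beta)
  from positive_cosine_sum_has_zero_frequency[OF fin \<open>d > 0\<close> this]
  show "\<exists>m0. (m0, 0) \<in> ?M" by (metis prod.collapse)
  have "\<forall>x\<in>{0..c}. (\<Sum>i\<in>?M. a (fst i) (snd i) * cos (real (fst i) * pi * x / c)) > 0"
    using pos_x by (simp add: u case_prod_beta)
  from positive_cosine_sum_has_zero_frequency[OF fin \<open>c > 0\<close> this]
  show "\<exists>n0. (0, n0) \<in> ?M" by (metis prod.collapse)
qed

lemma neumann_eigenfunction_edge_values_cancel:
  assumes "c > 0" "d > 0" "lam \<noteq> 0" "neumann_eigenfunction c d lam u"
    and m0: "(m0, 0) \<in> neumann_modes c d lam" and n0: "(0, n0) \<in> neumann_modes c d lam"
  shows "\<exists>x\<in>{0..c}. \<exists>y\<in>{0..d}. u (x, 0) + u (0, y) = 0"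
proof -
  let ?M = "neumann_modes c d lam"
  obtain a where u: "\<And>x y. u (x, y) =
      (\<Sum>(m, n) \<in> ?M. a m n * cos (real m * pi * x / c) * cos (real n * pi * y / d))"
    using assms(4) unfolding neumann_eigenfunction_def by blast
  have "(0, 0) \<notin> ?M"
    using \<open>lam \<noteq> 0\<close> by (simp add: neumann_modes_def neumann_eigenvalue_def)
  with m0 n0 have "m0 \<ge> 1" "n0 \<ge> 1" by (auto simp: Suc_le_eq intro: gr0I)
  define g where "g = gcd m0 n0"
  obtain e h where gh: "g = 2 ^ e * h" and "odd h"
  proof (rule multiplicity_decompose'[of g 2])
    show "g \<noteq> 0" using \<open>m0 \<ge> 1\<close> by (simp add: g_def)
  qed auto
  define p where "p = m0 div g"
  define q where "q = n0 div g"
  have "p \<ge> 1" "q \<ge> 1"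
    using \<open>m0 \<ge> 1\<close> \<open>n0 \<ge> 1\<close>
    by (simp_all add: p_def q_def g_def Suc_le_eq div_greater_zero_iff gcd_le1_nat gcd_le2_nat)
  define x0 where "x0 = c / (real p * 2 ^ e)"
  define y0 where "y0 = d / (real q * 2 ^ e)"
  have "1 \<le> real k * 2 ^ e" if "k \<ge> 1" for k :: nat
    using mult_mono[of 1 "real k" 1 "2 ^ e"] that by simp
  then have "x0 \<in> {0..c}" "y0 \<in> {0..d}"
    using \<open>c > 0\<close> \<open>d > 0\<close> \<open>p \<ge> 1\<close> \<open>q \<ge> 1\<close> by (auto simp: x0_def y0_def field_simps)
  have cancel: "cos (real m * pi * x0 / c) + cos (real n * pi * y0 / d) = 0"
    if mode: "(m, n) \<in> ?M" for m n
  proof -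
    obtain s t where st: "m = p * 2 ^ e * s" "n = q * 2 ^ e * t" and "odd s \<longleftrightarrow> even t"
      using ellipse_lattice_point_decompose[OF \<open>m0 \<ge> 1\<close> \<open>n0 \<ge> 1\<close>
          neumann_modes_ellipse[OF assms(1-3) m0 n0 mode] gh[unfolded g_def] \<open>odd h\<close>]
      unfolding p_def q_def g_def by blast
    have "real m * pi * x0 / c = real s * pi" "real n * pi * y0 / d = real t * pi"
      using \<open>c > 0\<close> \<open>d > 0\<close> \<open>p \<ge> 1\<close> \<open>q \<ge> 1\<close> by (simp_all add: st x0_def y0_def field_simps)
    with \<open>odd s \<longleftrightarrow> even t\<close> show ?thesis
      by (auto simp: neg_one_odd_power neg_one_even_power)
  qed
  have "u (x0, 0) + u (0, y0) =
      (\<Sum>(m, n) \<in> ?M. a m n * (cos (real m * pi * x0 / c) + cos (real n * pi * y0 / d)))"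
    by (simp add: u sum.distrib[symmetric] case_prod_beta algebra_simps)
  also have "\<dots> = 0"
    using cancel by (intro sum.neutral) auto
  finally show ?thesis
    using \<open>x0 \<in> {0..c}\<close> \<open>y0 \<in> {0..d}\<close> by blast
qed

lemma closure_rect:
  assumes "c > 0" "d > 0"
  shows "closure (rect c d) = {0..c} \<times> {0..d}"
  using assms by (simp add: rect_def closure_Times)

lemma rect_axis_edges_subset_frontier:
  assumes "c > 0" "d > 0"
  shows "{0..c} \<times> {0} \<union> {0} \<times> {0..d} \<subseteq> frontier (rect c d)"
proof -
  have "interior (rect c d) = rect c d"
    by (simp add: rect_def interior_open open_Times)
  then show ?thesis
    unfolding frontier_def closure_rect[OF assms] using assms by (auto simp: rect_def)
qed

theorem theorem1p1:
  fixes c d lam :: real and u :: "real \<times> real \<Rightarrow> real"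
  assumes "c > 0" and "d > 0"
    and "neumann_eigenfunction c d lam u"
    and "\<forall>p \<in> frontier (rect c d). u p > 0"
  shows "\<exists>k > 0. \<forall>p \<in> closure (rect c d). u p = k"
proof -
  have pos_x: "\<forall>x\<in>{0..c}. u (x, 0) > 0" and pos_y: "\<forall>y\<in>{0..d}. u (0, y) > 0"
    using rect_axis_edges_subset_frontier[OF assms(1,2)] assms(4) by auto
  obtain m0 n0 where "(m0, 0) \<in> neumann_modes c d lam" "(0, n0) \<in> neumann_modes c d lam"
    using neumann_eigenfunction_edge_modes[OF assms(1-3) pos_x pos_y] by blast
  have "lam = 0"
  proof (rule ccontr)
    assume "lam \<noteq> 0"
    then obtain x y where "x \<in> {0..c}" "y \<in> {0..d}" "u (x, 0) + u (0, y) = 0"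
      using neumann_eigenfunction_edge_values_cancel assms(1-3)
        \<open>(m0, 0) \<in> neumann_modes c d lam\<close> \<open>(0, n0) \<in> neumann_modes c d lam\<close> by blast
    with pos_x pos_y show False
      by (metis add_pos_pos less_irrefl)
  qed
  then obtain k where u: "\<forall>p. u p = k"
    using neumann_eigenfunction_zero_eigenvalue assms(1-3) by blast
  moreover have "k > 0"
    using pos_x \<open>c > 0\<close> u by auto
  ultimately show ?thesis by blast
qed

end
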